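(* Let $p\in(1/2,1)$, $V\in\{G,B\}$ and $r\ge2$ an integer, and let $p_f$ denote the value of $p_f$ at $\epsilon=\epsilon_r$. Then $$\lim_{\epsilon\to\epsilon_r^+}\mathbb{P}_{Y\text{-cas}}(\epsilon)=p_f^{r+1}\frac{1+(1-p_f)p_f^{r}}{1-r(1-p_f)p_f^{r}},\qquad \lim_{\epsilon\to\epsilon_r^-}\mathbb{P}_{Y\text{-cas}}(\epsilon)=\frac{p_f^{r}}{1-r(1-p_f)p_f^{r}},$$ so that as $\epsilon$ increases through $\epsilon_r$ the probability of a $Y$ cascade decreases, with relative drop $$\delta_r=\frac{\mathbb{P}_{Y\text{-cas}}(\epsilon_r^-)-\mathbb{P}_{Y\text{-cas}}(\epsilon_r^+)}{\mathbb{P}_{Y\text{-cas}}(\epsilon_r^-)}=(1-p_f)(1-p_f^{r+1}).$$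
   Context: Observational learning model: an item has true value $V\in\{G,B\}$; agents arrive sequentially, each receives a private binary signal equal to the "correct" signal with probability $p\in(1/2,1)$, and each agent is independently fake with probability $\epsilon\in[0,1)$ (a fake agent's recorded action is always $Y$ = buy). Define $a=p+(1-p)\epsilon$, $b=p(1-\epsilon)$, $\alpha=p/(1-p)$ and $\eta=\eta(\epsilon)=\log\big(a/(1-b)\big)/\log\alpha\in(0,1]$. Given $V$, let $p_f=a$ if $V=G$ and $p_f=1-b$ if $V=B$. Before any cascade, the agents' sufficient statistic $h$ evolves as the following random walk: $h_0=0$ and, independently at each step, $h$ increases by $\eta$ with probability $p_f$ (an observed $Y$) or decreases by $1$ with probability $1-p_f$ (an observed $N$); the walk is stopped the first time it leaves $[-1,1]$. Leaving above $1$ is a $Y$ cascade. $\mathbb{P}_{Y\text{-cas}}(\epsilon)$ denotes the probability (given $V$) that the walk leaves $[-1,1]$ above $1$. The thresholds are $\epsilon_r=\dfrac{\alpha-\alpha^{1/r}}{\alpha^{1/r+1}-1}$, $r=1,2,\ldots$. *)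

theory Defs
  imports Complex_Main
begin

datatype item_value = G | B

definition a_par :: "real \<Rightarrow> real \<Rightarrow> real" where
  "a_par p \<epsilon> = p + (1 - p) * \<epsilon>"

definition b_par :: "real \<Rightarrow> real \<Rightarrow> real" where
  "b_par p \<epsilon> = p * (1 - \<epsilon>)"

definition alpha_par :: "real \<Rightarrow> real" where
  "alpha_par p = p / (1 - p)"

definition eta_par :: "real \<Rightarrow> real \<Rightarrow> real" where
  "eta_par p \<epsilon> = ln (a_par p \<epsilon> / (1 - b_par p \<epsilon>)) / ln (alpha_par p)"

definition p_f :: "item_value \<Rightarrow> real \<Rightarrow> real \<Rightarrow> real" where
  "p_f V p \<epsilon> = (case V of G \<Rightarrow> a_par p \<epsilon> | B \<Rightarrow> 1 - b_par p \<epsilon>)"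

definition eps_thr :: "real \<Rightarrow> nat \<Rightarrow> real" where
  "eps_thr p r = (alpha_par p - alpha_par p powr (1 / real r))
                 / (alpha_par p powr (1 / real r + 1) - 1)"

text \<open>The random walk: a path is a list of observed actions (True = Y = step +eta,
  False = N = step -1). h after the path:\<close>
definition walk_pos :: "real \<Rightarrow> bool list \<Rightarrow> real" where
  "walk_pos \<eta> xs = (\<Sum>x\<leftarrow>xs. if x then \<eta> else -1)"

definition stays_inside :: "real \<Rightarrow> bool list \<Rightarrow> bool" where
  "stays_inside \<eta> xs = (\<forall>k\<le>length xs. walk_pos \<eta> (take k xs) \<in> {-1..1})"

definition path_prob :: "real \<Rightarrow> bool list \<Rightarrow> real" where
  "path_prob q xs = (\<Prod>x\<leftarrow>xs. if x then q else 1 - q)"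

text \<open>Probability that the walk (up-step eta with prob. q, down-step 1 otherwise),
  stopped at the first exit from [-1,1], exits above 1: sum over all stopping
  times n+1 of the probabilities of the paths that stay inside for n steps and
  exit above 1 at step n+1.\<close>
definition Y_exit_prob :: "real \<Rightarrow> real \<Rightarrow> real" where
  "Y_exit_prob \<eta> q =
     (\<Sum>n. \<Sum>xs | length xs = Suc n \<and> stays_inside \<eta> (butlast xs) \<and> walk_pos \<eta> xs > 1.
              path_prob q xs)"

definition P_Ycas :: "real \<Rightarrow> item_value \<Rightarrow> real \<Rightarrow> real" where
  "P_Ycas p V \<epsilon> = Y_exit_prob (eta_par p \<epsilon>) (p_f V p \<epsilon>)"

end

(*
  Near eps_r the up-step eta of the walk tends to 1/r. A position reached by k up-steps and
  d down-steps is (j + k (r eta - 1)) / r with j = k - r d, so for a fixed lattice state (j, k)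
  with k >= 1 the tests against -1 and 1 are eventually decided by the integer j alone, but
  differently on the two sides of eps_r: k (r eta - 1) is a small negative number for eps > eps_r
  and a small positive one for eps < eps_r. Three down-steps always leave [-1, 1], so the series
  of first-exit probabilities is dominated by a geometric series uniformly in eps, and Tannery's
  theorem turns both one-sided limits into exit probabilities h of a single walk on the integers
  with steps +1 and -r. Its first-step equations form a linear chain with solution
  h 1 = q^r / (1 - r (1 - q) q^r); the limit from the left is h 1, the limit from the right is
  q h 1 + (1 - q) q h (1 - r), and the relative drop follows by algebra.
*)

theory Submission
  imports Defs "HOL-Analysis.Uniform_Limit"
begin

section \<open>Walks with two kinds of steps, killed outside a region\<close>

text \<open>The walk from \<open>s\<close> steps to \<open>u s\<close> with probability \<open>q\<close> and to \<open>d s\<close> otherwise;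
  \<open>first_exit_at I A u d q s n\<close> is the probability that it stays in \<open>I\<close> up to time \<open>n\<close> and
  is in \<open>A\<close> at time \<open>n + 1\<close>.\<close>
fun first_exit_at ::
  "('s \<Rightarrow> bool) \<Rightarrow> ('s \<Rightarrow> bool) \<Rightarrow> ('s \<Rightarrow> 's) \<Rightarrow> ('s \<Rightarrow> 's) \<Rightarrow> real \<Rightarrow> 's \<Rightarrow> nat \<Rightarrow> real"
where
  "first_exit_at I A u d q s 0 =
     (if I s then q * of_bool (A (u s)) + (1 - q) * of_bool (A (d s)) else 0)"
| "first_exit_at I A u d q s (Suc n) =
     (if I s then q * first_exit_at I A u d q (u s) n + (1 - q) * first_exit_at I A u d q (d s) n
      else 0)"

definition exit_prob ::
  "('s \<Rightarrow> bool) \<Rightarrow> ('s \<Rightarrow> bool) \<Rightarrow> ('s \<Rightarrow> 's) \<Rightarrow> ('s \<Rightarrow> 's) \<Rightarrow> real \<Rightarrow> 's \<Rightarrow> real"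
where
  "exit_prob I A u d q s = (\<Sum>n. first_exit_at I A u d q s n)"

lemma first_exit_at_outside: "\<not> I s \<Longrightarrow> first_exit_at I A u d q s n = 0"
  by (cases n) auto

lemma first_exit_at_transfer:
  assumes "\<And>s. I' s = I (f s)" "\<And>s. A' s = A (f s)"
    and "\<And>s. f (u' s) = u (f s)" "\<And>s. f (d' s) = d (f s)"
  shows "first_exit_at I' A' u' d' q s n = first_exit_at I A u d q (f s) n"
  by (induction n arbitrary: s) (simp_all add: assms)

lemma exit_prob_transfer:
  assumes "\<And>s. I' s = I (f s)" "\<And>s. A' s = A (f s)"
    and "\<And>s. f (u' s) = u (f s)" "\<And>s. f (d' s) = d (f s)"
  shows "exit_prob I' A' u' d' q s = exit_prob I A u d q (f s)"
  unfolding exit_prob_def by (intro arg_cong[where f = suminf] ext first_exit_at_transfer assms)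

lemma first_exit_at_nonneg: "0 \<le> q \<Longrightarrow> q \<le> 1 \<Longrightarrow> 0 \<le> first_exit_at I A u d q s n"
  by (induction n arbitrary: s) auto

lemma first_exit_at_le_1: "0 \<le> q \<Longrightarrow> q \<le> 1 \<Longrightarrow> first_exit_at I A u d q s n \<le> 1"
  by (induction n arbitrary: s) (auto intro!: convex_bound_le)

lemma first_exit_at_le_bound:
  assumes "0 \<le> q" "q \<le> 1" "0 \<le> c" "\<And>t. first_exit_at I A u d q t n \<le> c"
  shows "first_exit_at I A u d q s (n + j) \<le> c"
  using assms(4) by (induction j arbitrary: s) (auto intro!: convex_bound_le simp: assms(1-3))

text \<open>If \<open>j\<close> down-steps lead out of \<open>I\<close>, the walk is killed within \<open>j\<close> steps with probability
  at least \<open>(1 - q)^j\<close>, which shrinks any uniform bound by that factor.\<close>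
lemma first_exit_at_le_killed:
  assumes q: "0 \<le> q" "q \<le> 1" and c: "0 \<le> c" "\<And>t. first_exit_at I A u d q t n \<le> c"
    and kill: "I s \<Longrightarrow> \<not> I ((d ^^ j) s)"
  shows "first_exit_at I A u d q s (n + j) \<le> (1 - (1 - q) ^ j) * c"
  using kill
proof (induction j arbitrary: s)
  case 0
  then have "\<not> I s" by auto
  then show ?case by (simp add: first_exit_at_outside)
next
  case (Suc j)
  have "(1 - q) ^ Suc j \<le> 1"
    using q by (intro power_le_one) auto
  then have nonneg: "0 \<le> (1 - (1 - q) ^ Suc j) * c"
    using c by simp
  show ?case
  proof (cases "I s")
    case True
    have "first_exit_at I A u d q (u s) (n + j) \<le> c"
      by (rule first_exit_at_le_bound[OF q c])
    moreover have "first_exit_at I A u d q (d s) (n + j) \<le> (1 - (1 - q) ^ j) * c"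
      using Suc.prems True by (intro Suc.IH) (simp add: funpow_swap1)
    ultimately have "first_exit_at I A u d q s (n + Suc j)
        \<le> q * c + (1 - q) * ((1 - (1 - q) ^ j) * c)"
      using True q by (auto intro!: add_mono mult_left_mono)
    also have "\<dots> = (1 - (1 - q) ^ Suc j) * c"
      by (simp add: algebra_simps)
    finally show ?thesis .
  qed (use nonneg in \<open>simp add: first_exit_at_outside\<close>)
qed

lemma first_exit_at_le_geometric:
  assumes q: "0 \<le> q" "q \<le> 1" and kill: "\<And>s. I s \<Longrightarrow> \<not> I ((d ^^ m) s)"
  shows "first_exit_at I A u d q s (m * k + i) \<le> (1 - (1 - q) ^ m) ^ k"
proof (induction k arbitrary: s)
  case 0
  then show ?case using first_exit_at_le_1[OF q] by simp
next
  case (Suc k)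
  have "(1 - q) ^ m \<le> 1"
    using q by (intro power_le_one) auto
  then have "first_exit_at I A u d q s ((m * k + i) + m) \<le> (1 - (1 - q) ^ m) * (1 - (1 - q) ^ m) ^ k"
    using Suc.IH q kill by (intro first_exit_at_le_killed) auto
  then show ?case
    by (simp add: algebra_simps)
qed

lemma first_exit_at_le_uniform:
  assumes q: "0 \<le> q" "q \<le> q'" "q' \<le> 1" and kill: "\<And>s. I s \<Longrightarrow> \<not> I ((d ^^ m) s)"
  shows "first_exit_at I A u d q s n \<le> (1 - (1 - q') ^ m) ^ (n div m)"
proof -
  have "first_exit_at I A u d q s (m * (n div m) + n mod m) \<le> (1 - (1 - q) ^ m) ^ (n div m)"
    using q kill by (intro first_exit_at_le_geometric) auto
  also have "\<dots> \<le> (1 - (1 - q') ^ m) ^ (n div m)"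
    using q by (intro power_mono) (auto simp: power_mono power_le_one)
  finally show ?thesis by simp
qed

lemma summable_power_div:
  fixes c :: real
  assumes c: "0 < c" "c < 1" and m: "0 < m"
  shows "summable (\<lambda>n. c ^ (n div m))"
proof (rule summable_comparison_test')
  define s where "s = root m c"
  have s: "0 < s" "s < 1" "s ^ m = c"
    using c m by (auto simp: s_def real_root_lt_1_iff)
  show "summable (\<lambda>n. s ^ n / c)"
    using s by (intro summable_divide summable_geometric) auto
  fix n
  have "c * c ^ (n div m) = s ^ m * s ^ (m * (n div m))"
    by (simp add: s(3) power_mult)
  also have "\<dots> \<le> s ^ (n mod m) * s ^ (m * (n div m))"
    using s m by (intro mult_right_mono power_decreasing) auto
  also have "\<dots> = s ^ n"
    by (simp flip: power_add)
  finally show "norm (c ^ (n div m)) \<le> s ^ n / c"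
    using c by (simp add: field_simps)
qed

lemma summable_killing_bound:
  fixes q :: real
  assumes "0 < q" "q < 1" "0 < m"
  shows "summable (\<lambda>n. (1 - (1 - q) ^ m) ^ (n div m))"
proof (rule summable_power_div)
  show "0 < 1 - (1 - q) ^ m" "1 - (1 - q) ^ m < 1"
    using assms by (auto simp: power_less_one_iff)
qed (fact assms)

lemma summable_first_exit_at:
  assumes q: "0 \<le> q" "q < 1" and m: "0 < m" and kill: "\<And>s. I s \<Longrightarrow> \<not> I ((d ^^ m) s)"
  shows "summable (first_exit_at I A u d q s)"
proof (rule summable_comparison_test')
  define q' where "q' = (1 + q) / 2"
  have q': "q \<le> q'" "0 < q'" "q' < 1"
    using q by (auto simp: q'_def)
  show "summable (\<lambda>n. (1 - (1 - q') ^ m) ^ (n div m))"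
    using q' m by (intro summable_killing_bound)
  show "norm (first_exit_at I A u d q s n) \<le> (1 - (1 - q') ^ m) ^ (n div m)" for n
    using q q' kill first_exit_at_nonneg[of q I A u d s n]
      first_exit_at_le_uniform[where q = q and q' = q' and s = s and n = n]
    by simp
qed

lemma exit_prob_step:
  assumes "\<And>t. summable (first_exit_at I A u d q t)"
  shows "exit_prob I A u d q s =
    (if I s then q * of_bool (A (u s)) + (1 - q) * of_bool (A (d s))
                 + q * exit_prob I A u d q (u s) + (1 - q) * exit_prob I A u d q (d s)
     else 0)"
proof -
  have "(\<lambda>n. first_exit_at I A u d q s (Suc n)) sums
      (if I s then q * exit_prob I A u d q (u s) + (1 - q) * exit_prob I A u d q (d s) else 0)"
    unfolding exit_prob_def using assms by (auto intro!: sums_add sums_mult summable_sums)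
  then show ?thesis
    unfolding exit_prob_def sums_Suc_iff by (auto dest!: sums_unique)
qed

lemma first_exit_at_tendsto:
  fixes I A :: "'e \<Rightarrow> 's \<Rightarrow> bool" and q :: "'e \<Rightarrow> real"
  assumes q: "(q \<longlongrightarrow> q_lim) F"
    and closed: "\<And>s. P s \<Longrightarrow> P (u s) \<and> P (d s)"
    and stable: "\<And>s. P s \<Longrightarrow> eventually (\<lambda>e. (I e s \<longleftrightarrow> I_lim s) \<and> (A e s \<longleftrightarrow> A_lim s)) F"
    and "P s"
  shows "((\<lambda>e. first_exit_at (I e) (A e) u d (q e) s n) \<longlongrightarrow> first_exit_at I_lim A_lim u d q_lim s n) F"
  using \<open>P s\<close>
proof (induction n arbitrary: s)
  case 0
  have "P (u s)" "P (d s)"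
    using closed[OF 0] by auto
  with 0 have "eventually (\<lambda>e. (I e s \<longleftrightarrow> I_lim s) \<and> (A e s \<longleftrightarrow> A_lim s)) F"
    "eventually (\<lambda>e. (I e (u s) \<longleftrightarrow> I_lim (u s)) \<and> (A e (u s) \<longleftrightarrow> A_lim (u s))) F"
    "eventually (\<lambda>e. (I e (d s) \<longleftrightarrow> I_lim (d s)) \<and> (A e (d s) \<longleftrightarrow> A_lim (d s))) F"
    by (simp_all add: stable)
  then have "eventually (\<lambda>e.
      (if I_lim s then q e * of_bool (A_lim (u s)) + (1 - q e) * of_bool (A_lim (d s)) else 0)
      = first_exit_at (I e) (A e) u d (q e) s 0) F"
    by eventually_elim auto
  moreover have "((\<lambda>e.
      if I_lim s then q e * of_bool (A_lim (u s)) + (1 - q e) * of_bool (A_lim (d s)) else 0)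
      \<longlongrightarrow> first_exit_at I_lim A_lim u d q_lim s 0) F"
    by (cases "I_lim s") (auto intro!: tendsto_intros q)
  ultimately show ?case
    by (rule Lim_transform_eventually[rotated])
next
  case (Suc n)
  have "eventually (\<lambda>e. (if I_lim s then q e * first_exit_at (I e) (A e) u d (q e) (u s) n
      + (1 - q e) * first_exit_at (I e) (A e) u d (q e) (d s) n else 0)
      = first_exit_at (I e) (A e) u d (q e) s (Suc n)) F"
    using stable[OF Suc.prems] by eventually_elim auto
  moreover have "((\<lambda>e. if I_lim s then q e * first_exit_at (I e) (A e) u d (q e) (u s) n
                      + (1 - q e) * first_exit_at (I e) (A e) u d (q e) (d s) n else 0)
      \<longlongrightarrow> first_exit_at I_lim A_lim u d q_lim s (Suc n)) F"
    using closed[OF Suc.prems] by (cases "I_lim s") (auto intro!: tendsto_intros q Suc.IH)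
  ultimately show ?case
    by (rule Lim_transform_eventually[rotated])
qed

lemma exit_prob_tendsto:
  fixes I A :: "'e \<Rightarrow> 's \<Rightarrow> bool" and q :: "'e \<Rightarrow> real"
  assumes q: "(q \<longlongrightarrow> q_lim) F" "q_lim < 1" "eventually (\<lambda>e. 0 \<le> q e) F" and "F \<noteq> bot"
    and m: "0 < m" and kill: "\<And>e s. I e s \<Longrightarrow> \<not> I e ((d ^^ m) s)"
    and closed: "\<And>s. P s \<Longrightarrow> P (u s) \<and> P (d s)"
    and stable: "\<And>s. P s \<Longrightarrow> eventually (\<lambda>e. (I e s \<longleftrightarrow> I_lim s) \<and> (A e s \<longleftrightarrow> A_lim s)) F"
    and "P s"
  shows "((\<lambda>e. exit_prob (I e) (A e) u d (q e) s) \<longlongrightarrow> exit_prob I_lim A_lim u d q_lim s) F"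
proof -
  define q' where "q' = (1 + q_lim) / 2"
  have "q_lim < q'" "q' < 1"
    using q by (auto simp: q'_def)
  have "eventually (\<lambda>e. 0 \<le> q e \<and> q e \<le> q') F"
    using q(3) order_tendstoD(2)[OF q(1) \<open>q_lim < q'\<close>] by eventually_elim auto
  then have "eventually (\<lambda>(n, e). 0 \<le> q e \<and> q e \<le> q') (at_top \<times>\<^sub>F F)"
    unfolding eventually_prod_filter by (intro exI[of _ "\<lambda>_. True"] exI conjI) auto
  then have bound: "eventually (\<lambda>(n, e). norm (first_exit_at (I e) (A e) u d (q e) s n)
      \<le> (1 - (1 - q') ^ m) ^ (n div m)) (at_top \<times>\<^sub>F F)"
    by (rule eventually_mono)
      (use \<open>q' < 1\<close> kill in \<open>auto simp: first_exit_at_nonneg first_exit_at_le_uniform\<close>)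
  have "0 \<le> q_lim"
    using q(1,3) \<open>F \<noteq> bot\<close> by (rule tendsto_lowerbound)
  then have dominated: "summable (\<lambda>n. (1 - (1 - q') ^ m) ^ (n div m))"
    using \<open>q_lim < q'\<close> \<open>q' < 1\<close> m by (intro summable_killing_bound) auto
  have limit: "((\<lambda>e. first_exit_at (I e) (A e) u d (q e) s n)
      \<longlongrightarrow> first_exit_at I_lim A_lim u d q_lim s n) F" for n
    using q(1) closed stable \<open>P s\<close> by (rule first_exit_at_tendsto)
  show ?thesis
    unfolding exit_prob_def using tannerys_theorem[OF limit bound dominated \<open>F \<noteq> bot\<close>] by blast
qed

section \<open>The walk of the sufficient statistic\<close>

definition walk_exit_above :: "real \<Rightarrow> real \<Rightarrow> real \<Rightarrow> real" where
  "walk_exit_above \<eta> q = exit_prob (\<lambda>x. x \<in> {-1..1}) (\<lambda>x. 1 < x) (\<lambda>x. x + \<eta>) (\<lambda>x. x - 1) q"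

definition stays_inside_from :: "real \<Rightarrow> real \<Rightarrow> bool list \<Rightarrow> bool" where
  "stays_inside_from \<eta> x xs = (\<forall>k\<le>length xs. x + walk_pos \<eta> (take k xs) \<in> {-1..1})"

lemma walk_pos_Cons [simp]: "walk_pos \<eta> (b # xs) = (if b then \<eta> else -1) + walk_pos \<eta> xs"
  by (simp add: walk_pos_def)

lemma path_prob_Cons [simp]: "path_prob q (b # xs) = (if b then q else 1 - q) * path_prob q xs"
  by (simp add: path_prob_def)

lemma stays_inside_from_Nil [simp]: "stays_inside_from \<eta> x [] \<longleftrightarrow> x \<in> {-1..1}"
  by (simp add: stays_inside_from_def walk_pos_def)

lemma stays_inside_from_Cons [simp]:
  "stays_inside_from \<eta> x (b # xs) \<longleftrightarrow>
     x \<in> {-1..1} \<and> stays_inside_from \<eta> (x + (if b then \<eta> else -1)) xs"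
  unfolding stays_inside_from_def
  by (simp only: length_Cons less_Suc_eq_le[symmetric] All_less_Suc2) (simp add: walk_pos_def add.assoc)

lemma sum_bool_lists_Suc:
  "(\<Sum>xs | length xs = Suc n \<and> P xs. f xs) =
     (\<Sum>ys | length ys = n \<and> P (True # ys). f (True # ys))
   + (\<Sum>ys | length ys = n \<and> P (False # ys). f (False # ys))"
proof -
  define L where "L b = {ys. length ys = n \<and> P (b # ys)}" for b
  have split: "{xs. length xs = Suc n \<and> P xs} = Cons True ` L True \<union> Cons False ` L False"
  proof (rule set_eqI, rule iffI)
    fix xs
    assume "xs \<in> {xs. length xs = Suc n \<and> P xs}"
    then obtain b ys where "xs = b # ys" "length ys = n" "P xs"
      by (auto simp: length_Suc_conv)
    then show "xs \<in> Cons True ` L True \<union> Cons False ` L False"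
      by (cases b) (auto simp: L_def)
  qed (auto simp: L_def)
  have "finite (L b)" for b
    unfolding L_def by (rule finite_subset[OF _ finite_lists_length_eq[of UNIV n]]) auto
  then have "sum f (Cons True ` L True \<union> Cons False ` L False)
      = sum f (Cons True ` L True) + sum f (Cons False ` L False)"
    by (intro sum.union_disjoint) auto
  then show ?thesis
    by (simp add: split sum.reindex L_def)
qed

lemma first_exit_at_walk_eq_path_sum:
  "first_exit_at (\<lambda>x. x \<in> {-1..1}) (\<lambda>x. 1 < x) (\<lambda>x. x + \<eta>) (\<lambda>x. x - 1) q x n =
     (\<Sum>xs | length xs = Suc n \<and> stays_inside_from \<eta> x (butlast xs) \<and> 1 < x + walk_pos \<eta> xs.
        path_prob q xs)"
proof (induction n arbitrary: x)
  case 0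
  have "{ys :: bool list. length ys = 0 \<and> Q ys} = (if Q [] then {[]} else {})" for Q
    by auto
  then show ?case
    by (simp add: sum_bool_lists_Suc walk_pos_def path_prob_def)
next
  case (Suc n)
  let ?exit = "first_exit_at (\<lambda>x. x \<in> {-1..1}) (\<lambda>x. 1 < x) (\<lambda>x. x + \<eta>) (\<lambda>x. x - 1) q"
  have sets: "{ys. length ys = Suc n \<and> stays_inside_from \<eta> x (butlast (b # ys))
                   \<and> 1 < x + walk_pos \<eta> (b # ys)} =
      (if x \<in> {-1..1}
       then {ys. length ys = Suc n \<and> stays_inside_from \<eta> (x + (if b then \<eta> else -1)) (butlast ys)
                 \<and> 1 < x + (if b then \<eta> else -1) + walk_pos \<eta> ys}
       else {})" for b
    by (auto simp: add.assoc)
  have by_head: "(\<Sum>ys | length ys = Suc n \<and> stays_inside_from \<eta> x (butlast (b # ys))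
                           \<and> 1 < x + walk_pos \<eta> (b # ys).
      path_prob q (b # ys))
    = (if x \<in> {-1..1} then (if b then q else 1 - q) * ?exit (x + (if b then \<eta> else -1)) n else 0)" for b
    by (cases "x \<in> {-1..1}")
      (simp_all only: sets if_True if_False sum.empty path_prob_Cons sum_distrib_left[symmetric] Suc.IH)
  show ?case
    by (subst sum_bool_lists_Suc) (simp only: by_head, simp)
qed

lemma Y_exit_prob_eq_walk_exit_above: "Y_exit_prob \<eta> q = walk_exit_above \<eta> q 0"
proof -
  have "stays_inside_from \<eta> 0 = stays_inside \<eta>"
    by (simp add: fun_eq_iff stays_inside_from_def stays_inside_def)
  then show ?thesis
    unfolding Y_exit_prob_def walk_exit_above_def exit_prob_def first_exit_at_walk_eq_path_sum
    by simp
qed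

lemma summable_first_exit_at_walk:
  fixes \<eta> x :: real
  assumes "0 \<le> q" "q < 1"
  shows "summable (first_exit_at (\<lambda>x. x \<in> {-1..1}) (\<lambda>x. 1 < x) (\<lambda>x. x + \<eta>) (\<lambda>x. x - 1) q x)"
  using assms by (intro summable_first_exit_at[where m = 3]) (simp_all add: numeral_3_eq_3)

text \<open>The positions \<open>0\<close> and \<open>-1\<close> are reached without up-steps, so they do not move with \<open>\<eta>\<close>
  (and \<open>-1\<close> lies on the boundary); the limit argument needs an up-step, so these two steps are
  unrolled by hand.\<close>
lemma walk_exit_above_0:
  assumes "0 < \<eta>" "\<eta> \<le> 1" "0 \<le> q" "q < 1"
  shows "walk_exit_above \<eta> q 0 = q * walk_exit_above \<eta> q \<eta> + (1 - q) * q * walk_exit_above \<eta> q (\<eta> - 1)"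
proof -
  have step: "walk_exit_above \<eta> q x =
      (if x \<in> {-1..1} then q * of_bool (1 < x + \<eta>) + (1 - q) * of_bool (1 < x - 1)
          + q * walk_exit_above \<eta> q (x + \<eta>) + (1 - q) * walk_exit_above \<eta> q (x - 1)
       else 0)" for x
    unfolding walk_exit_above_def using assms(3,4)
    by (rule exit_prob_step[OF summable_first_exit_at_walk])
  have "walk_exit_above \<eta> q (-1) = q * walk_exit_above \<eta> q (\<eta> - 1)"
    using step[of "-1"] step[of "-2"] assms(1,2) by simp
  then show ?thesis
    using step[of 0] assms(1,2) by simp
qed

section \<open>Lattice encoding of positions\<close>

text \<open>State \<open>(j, k)\<close> stands for a path with \<open>k\<close> up-steps and \<open>(k - j) / r\<close> down-steps, so
  its position is \<open>k \<eta> - (k - j) / r\<close>.\<close>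
fun lattice_pos :: "real \<Rightarrow> nat \<Rightarrow> int \<times> nat \<Rightarrow> real" where
  "lattice_pos \<eta> r (j, k) = (of_int j + real k * (real r * \<eta> - 1)) / real r"

fun lattice_up :: "int \<times> nat \<Rightarrow> int \<times> nat" where
  "lattice_up (j, k) = (j + 1, Suc k)"

fun lattice_down :: "nat \<Rightarrow> int \<times> nat \<Rightarrow> int \<times> nat" where
  "lattice_down r (j, k) = (j - int r, k)"

lemma lattice_pos_up: "0 < r \<Longrightarrow> lattice_pos \<eta> r (lattice_up s) = lattice_pos \<eta> r s + \<eta>"
  by (cases s) (simp add: field_simps)

lemma lattice_pos_down: "0 < r \<Longrightarrow> lattice_pos \<eta> r (lattice_down r s) = lattice_pos \<eta> r s - 1"
  by (cases s) (simp add: field_simps)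

lemma walk_exit_above_lattice_pos:
  assumes "0 < r"
  shows "walk_exit_above \<eta> q (lattice_pos \<eta> r s) =
    exit_prob (\<lambda>s. lattice_pos \<eta> r s \<in> {-1..1}) (\<lambda>s. 1 < lattice_pos \<eta> r s)
      lattice_up (lattice_down r) q s"
  unfolding walk_exit_above_def
  by (rule exit_prob_transfer[symmetric]) (simp_all add: lattice_pos_up lattice_pos_down assms)

definition int_walk_exit :: "(int \<Rightarrow> bool) \<Rightarrow> (int \<Rightarrow> bool) \<Rightarrow> nat \<Rightarrow> real \<Rightarrow> int \<Rightarrow> real" where
  "int_walk_exit I A r q = exit_prob I A (\<lambda>j. j + 1) (\<lambda>j. j - int r) q"

lemma int_walk_exit_lattice:
  "int_walk_exit I A r q j =
     exit_prob (\<lambda>s. I (fst s)) (\<lambda>s. A (fst s)) lattice_up (lattice_down r) q (j, k)"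
proof -
  have "exit_prob (\<lambda>s. I (fst s)) (\<lambda>s. A (fst s)) lattice_up (lattice_down r) q s
      = exit_prob I A (\<lambda>j. j + 1) (\<lambda>j. j - int r) q (fst s)" for s
    by (rule exit_prob_transfer) (simp_all add: split_paired_all)
  then show ?thesis
    by (simp add: int_walk_exit_def)
qed

lemma lattice_exit_tendsto:
  fixes \<eta> q :: "'e \<Rightarrow> real"
  assumes r: "0 < r" and q: "(q \<longlongrightarrow> q_lim) F" "q_lim < 1" "eventually (\<lambda>e. 0 \<le> q e) F"
    and "F \<noteq> bot"
    and stable: "\<And>j k. 0 < k \<Longrightarrow> eventually (\<lambda>e. (lattice_pos (\<eta> e) r (j, k) \<in> {-1..1} \<longleftrightarrow> I j)
                                            \<and> (1 < lattice_pos (\<eta> e) r (j, k) \<longleftrightarrow> A j)) F"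
    and "0 < k"
  shows "((\<lambda>e. walk_exit_above (\<eta> e) (q e) (lattice_pos (\<eta> e) r (j, k)))
           \<longlongrightarrow> int_walk_exit I A r q_lim j) F"
  unfolding walk_exit_above_lattice_pos[OF r] int_walk_exit_lattice[where k = k]
proof (rule exit_prob_tendsto[where m = 3 and P = "\<lambda>s. 0 < snd s", OF q \<open>F \<noteq> bot\<close>])
  show "\<not> lattice_pos (\<eta> e) r ((lattice_down r ^^ 3) s) \<in> {-1..1}"
    if "lattice_pos (\<eta> e) r s \<in> {-1..1}" for e s
    using that by (simp add: numeral_3_eq_3 lattice_pos_down r)
  show "eventually (\<lambda>e. (lattice_pos (\<eta> e) r s \<in> {-1..1} \<longleftrightarrow> I (fst s))
                       \<and> (1 < lattice_pos (\<eta> e) r s \<longleftrightarrow> A (fst s))) F"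
    if "0 < snd s" for s
    using that stable by (cases s) auto
qed (use \<open>0 < k\<close> in \<open>auto simp: case_prod_beta\<close>)

lemma lattice_pos_iff:
  fixes \<eta> :: real and k r :: nat
  assumes "0 < r"
  defines "t \<equiv> real k * (real r * \<eta> - 1)"
  shows "lattice_pos \<eta> r (j, k) \<in> {-1..1} \<longleftrightarrow> - real r \<le> of_int j + t \<and> of_int j + t \<le> real r"
    and "1 < lattice_pos \<eta> r (j, k) \<longleftrightarrow> real r < of_int j + t"
  using assms by (simp_all add: t_def field_simps)

lemma lattice_pos_iff_below:
  assumes "0 < r" "-1 < real k * (real r * \<eta> - 1)" "real k * (real r * \<eta> - 1) < 0"
  shows "lattice_pos \<eta> r (j, k) \<in> {-1..1} \<longleftrightarrow> - int r < j \<and> j \<le> int r"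
    and "1 < lattice_pos \<eta> r (j, k) \<longleftrightarrow> int r < j"
  unfolding lattice_pos_iff[OF \<open>0 < r\<close>]
  using assms(2,3) int_less_real_le[of "- int r" j] int_less_real_le[of "int r" j] by auto

lemma lattice_pos_iff_above:
  assumes "0 < r" "0 < real k * (real r * \<eta> - 1)" "real k * (real r * \<eta> - 1) < 1"
  shows "lattice_pos \<eta> r (j, k) \<in> {-1..1} \<longleftrightarrow> - int r \<le> j \<and> j < int r"
    and "1 < lattice_pos \<eta> r (j, k) \<longleftrightarrow> int r \<le> j"
  unfolding lattice_pos_iff[OF \<open>0 < r\<close>]
  using assms(2,3) int_less_real_le[of j "int r"] int_less_real_le[of "- int r" j] by auto

section \<open>Model parameters at the threshold\<close>

lemma alpha_par_gt_1: "1/2 < p \<Longrightarrow> p < 1 \<Longrightarrow> 1 < alpha_par p"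
  by (simp add: alpha_par_def field_simps)

lemma eps_thr_eq:
  assumes "1/2 < p" "p < 1"
  shows "eps_thr p r = (alpha_par p - alpha_par p powr (1 / real r))
                       / (alpha_par p powr (1 / real r) * alpha_par p - 1)"
  using alpha_par_gt_1[OF assms] by (simp add: eps_thr_def powr_add)

lemma eps_thr_bounds:
  assumes p: "1/2 < p" "p < 1" and r: "2 \<le> r"
  shows "0 < eps_thr p r" "eps_thr p r < 1"
proof -
  define s where "s = alpha_par p powr (1 / real r)"
  have "1 < alpha_par p"
    using alpha_par_gt_1[OF p] .
  moreover have "1 < s" "s < alpha_par p"
    using \<open>1 < alpha_par p\<close> r powr_less_mono[of "1 / real r" 1 "alpha_par p"]
    by (auto simp: s_def)
  moreover have "1 < s * alpha_par p" "0 < (s - 1) * (alpha_par p + 1)"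
    using calculation by (simp_all add: less_1_mult)
  ultimately show "0 < eps_thr p r" "eps_thr p r < 1"
    by (simp_all add: eps_thr_eq[OF p] s_def[symmetric] field_simps)
qed

lemma a_par_pos: "0 < p \<Longrightarrow> p < 1 \<Longrightarrow> 0 \<le> \<epsilon> \<Longrightarrow> 0 < a_par p \<epsilon>"
  by (simp add: a_par_def add_pos_nonneg)

lemma one_minus_b_par_pos:
  assumes "0 < p" "p < 1" "0 \<le> \<epsilon>"
  shows "0 < 1 - b_par p \<epsilon>"
proof -
  have "0 \<le> p * \<epsilon>"
    using assms by simp
  then show ?thesis
    using assms unfolding b_par_def right_diff_distrib mult_1_right by linarith
qed

lemma eta_par_eps_thr:
  assumes p: "1/2 < p" "p < 1" and r: "0 < r"
  shows "eta_par p (eps_thr p r) = 1 / real r"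
proof -
  define \<alpha> s \<epsilon> where "\<alpha> = alpha_par p" and "s = \<alpha> powr (1 / real r)" and "\<epsilon> = eps_thr p r"
  have "1 < \<alpha>"
    using alpha_par_gt_1[OF p] by (simp add: \<alpha>_def)
  moreover have "1 \<le> s" "s \<le> \<alpha>"
    using \<open>1 < \<alpha>\<close> r powr_mono[of "1 / real r" 1 \<alpha>] by (auto simp: s_def ge_one_powr_ge_zero)
  ultimately have "0 < s * \<alpha> - 1"
    by (smt (verit) mult_less_cancel_left1)
  then have \<epsilon>: "\<epsilon> * (s * \<alpha> - 1) = \<alpha> - s"
    by (simp add: \<epsilon>_def eps_thr_eq[OF p] \<alpha>_def s_def)
  have "a_par p \<epsilon> - s * (1 - b_par p \<epsilon>) = (1 - p) * ((\<alpha> - s) - \<epsilon> * (s * \<alpha> - 1))"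
    using p by (simp add: a_par_def b_par_def \<alpha>_def alpha_par_def divide_simps) (simp add: algebra_simps)
  then have "a_par p \<epsilon> = s * (1 - b_par p \<epsilon>)"
    by (simp add: \<epsilon>)
  moreover have "0 \<le> \<epsilon>"
    using \<epsilon> \<open>s \<le> \<alpha>\<close> \<open>0 < s * \<alpha> - 1\<close> by (metis diff_ge_0_iff_ge zero_le_mult_iff not_less)
  then have "0 < 1 - b_par p \<epsilon>"
    using p by (intro one_minus_b_par_pos) auto
  ultimately have "a_par p \<epsilon> / (1 - b_par p \<epsilon>) = s"
    by simp
  then show ?thesis
    using \<open>1 < \<alpha>\<close> by (simp add: eta_par_def \<epsilon>_def s_def \<alpha>_def ln_powr)
qed

lemma eta_par_strict_antimono:
  assumes p: "1/2 < p" "p < 1" and "0 \<le> \<epsilon>" "\<epsilon> < \<epsilon>'"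
  shows "eta_par p \<epsilon>' < eta_par p \<epsilon>"
proof -
  have "0 < p" "0 \<le> \<epsilon>'"
    using assms by auto
  note pos = a_par_pos[OF \<open>0 < p\<close> p(2) \<open>0 \<le> \<epsilon>\<close>] one_minus_b_par_pos[OF \<open>0 < p\<close> p(2) \<open>0 \<le> \<epsilon>\<close>]
    a_par_pos[OF \<open>0 < p\<close> p(2) \<open>0 \<le> \<epsilon>'\<close>] one_minus_b_par_pos[OF \<open>0 < p\<close> p(2) \<open>0 \<le> \<epsilon>'\<close>]
  have "a_par p \<epsilon> * (1 - b_par p \<epsilon>') - a_par p \<epsilon>' * (1 - b_par p \<epsilon>) = (\<epsilon>' - \<epsilon>) * (2 * p - 1)"
    by (simp add: a_par_def b_par_def algebra_simps)
  also have "\<dots> > 0"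
    using assms by simp
  finally have "a_par p \<epsilon>' / (1 - b_par p \<epsilon>') < a_par p \<epsilon> / (1 - b_par p \<epsilon>)"
    using pos by (simp add: divide_simps)
  then show ?thesis
    using pos alpha_par_gt_1[OF p] by (simp add: eta_par_def divide_strict_right_mono)
qed

lemma isCont_eta_par:
  assumes p: "1/2 < p" "p < 1" and "0 \<le> \<epsilon>"
  shows "isCont (eta_par p) \<epsilon>"
proof -
  have "0 < p"
    using p by simp
  then show ?thesis
    unfolding eta_par_def[abs_def]
    using a_par_pos[OF \<open>0 < p\<close> p(2) \<open>0 \<le> \<epsilon>\<close>] one_minus_b_par_pos[OF \<open>0 < p\<close> p(2) \<open>0 \<le> \<epsilon>\<close>]
      alpha_par_gt_1[OF p]
    by (auto intro!: continuous_intros simp: a_par_def b_par_def)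
qed

lemma isCont_p_f: "isCont (p_f V p) \<epsilon>"
  unfolding p_f_def[abs_def] a_par_def b_par_def by (cases V) (auto intro!: continuous_intros)

lemma p_f_bounds:
  assumes "0 < p" "p < 1" "0 \<le> \<epsilon>" "\<epsilon> < 1"
  shows "0 < p_f V p \<epsilon>" "p_f V p \<epsilon> < 1"
proof -
  have "0 < (1 - p) * (1 - \<epsilon>)" "0 < p * (1 - \<epsilon>)" "0 \<le> (1 - p) * \<epsilon>" "0 \<le> p * \<epsilon>"
    using assms by auto
  then show "0 < p_f V p \<epsilon>" "p_f V p \<epsilon> < 1"
    using assms unfolding p_f_def a_par_def b_par_def by (cases V; simp add: algebra_simps)+
qed

lemma p_f_eps_thr_bounds:
  assumes p: "1/2 < p" "p < 1" and r: "2 \<le> r"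
  shows "0 < p_f V p (eps_thr p r)" "p_f V p (eps_thr p r) < 1"
  using p eps_thr_bounds[OF p r] by (auto intro!: p_f_bounds)

section \<open>One-sided limits at the threshold\<close>

lemma eta_par_tendsto_eps_thr:
  assumes p: "1/2 < p" "p < 1" and r: "2 \<le> r"
  shows "(eta_par p \<longlongrightarrow> 1 / real r) (at (eps_thr p r))"
  using isCont_eta_par[OF p, of "eps_thr p r"] eps_thr_bounds[OF p r] eta_par_eps_thr[OF p, of r] r
  by (simp add: isCont_def)

lemma lattice_deviation_tendsto:
  assumes p: "1/2 < p" "p < 1" and r: "2 \<le> r"
  shows "((\<lambda>e. real k * (real r * eta_par p e - 1)) \<longlongrightarrow> 0) (at (eps_thr p r))"
proof -
  have "((\<lambda>e. real k * (real r * eta_par p e - 1)) \<longlongrightarrow> real k * (real r * (1 / real r) - 1))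
      (at (eps_thr p r))"
    by (intro tendsto_intros eta_par_tendsto_eps_thr[OF p r])
  then show ?thesis
    using r by simp
qed

lemma P_Ycas_tendsto_int_walk_exit:
  fixes F :: "real filter" and V :: item_value
  assumes p: "1/2 < p" "p < 1" and r: "2 \<le> r" and F: "F \<noteq> bot" "F \<le> at (eps_thr p r)"
    and stable: "\<And>j k. 0 < k \<Longrightarrow>
      eventually (\<lambda>e. (lattice_pos (eta_par p e) r (j, k) \<in> {-1..1} \<longleftrightarrow> I j)
                     \<and> (1 < lattice_pos (eta_par p e) r (j, k) \<longleftrightarrow> A j)) F"
  defines "q \<equiv> p_f V p (eps_thr p r)"
  shows "(P_Ycas p V
           \<longlongrightarrow> q * int_walk_exit I A r q 1 + (1 - q) * q * int_walk_exit I A r q (1 - int r)) F"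
proof -
  let ?W = "\<lambda>e. walk_exit_above (eta_par p e) (p_f V p e)"
  have r0: "0 < r"
    using r by simp
  have q: "0 < q" "q < 1"
    unfolding q_def using p_f_eps_thr_bounds[OF p r] .
  have \<eta>_lim: "(eta_par p \<longlongrightarrow> 1 / real r) F"
    using eta_par_tendsto_eps_thr[OF p r] F(2) by (rule tendsto_mono[rotated])
  have q_lim: "(p_f V p \<longlongrightarrow> q) F"
    using isCont_p_f F(2) by (auto simp: isCont_def q_def intro: tendsto_mono)
  have "eventually (\<lambda>e. 0 < eta_par p e) F" "eventually (\<lambda>e. eta_par p e < 1) F"
    "eventually (\<lambda>e. 0 < p_f V p e) F" "eventually (\<lambda>e. p_f V p e < 1) F"
    using order_tendstoD[OF \<eta>_lim] order_tendstoD[OF q_lim] r q by auto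
  then have "eventually (\<lambda>e. p_f V p e * ?W e (lattice_pos (eta_par p e) r (1, 1))
      + (1 - p_f V p e) * p_f V p e * ?W e (lattice_pos (eta_par p e) r (1 - int r, 1))
      = P_Ycas p V e) F"
  proof eventually_elim
    case (elim e)
    have "lattice_pos (eta_par p e) r (1, 1) = eta_par p e"
      "lattice_pos (eta_par p e) r (1 - int r, 1) = eta_par p e - 1"
      using r0 by (simp_all add: field_simps)
    then show ?case
      using elim by (simp add: P_Ycas_def Y_exit_prob_eq_walk_exit_above walk_exit_above_0)
  qed
  moreover have "((\<lambda>e. p_f V p e * ?W e (lattice_pos (eta_par p e) r (1, 1))
      + (1 - p_f V p e) * p_f V p e * ?W e (lattice_pos (eta_par p e) r (1 - int r, 1)))
    \<longlongrightarrow> q * int_walk_exit I A r q 1 + (1 - q) * q * int_walk_exit I A r q (1 - int r)) F"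
    using r0 q_lim q(2) order_tendstoD(1)[OF q_lim \<open>0 < q\<close>] F(1) stable
    by (intro tendsto_intros lattice_exit_tendsto) (auto elim: eventually_mono)
  ultimately show ?thesis
    by (rule Lim_transform_eventually[rotated])
qed

lemma int_walk_exit_shift:
  "int_walk_exit (\<lambda>j. I (j + c)) (\<lambda>j. A (j + c)) r q j = int_walk_exit I A r q (j + c)"
  unfolding int_walk_exit_def by (rule exit_prob_transfer) (simp_all add: algebra_simps)

definition limit_walk_exit :: "nat \<Rightarrow> real \<Rightarrow> int \<Rightarrow> real" where
  "limit_walk_exit r = int_walk_exit (\<lambda>j. - int r < j \<and> j \<le> int r) (\<lambda>j. int r < j) r"

lemma P_Ycas_tendsto_at_right:
  fixes V :: item_value
  assumes p: "1/2 < p" "p < 1" and r: "2 \<le> r"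
  defines "q \<equiv> p_f V p (eps_thr p r)"
  shows "(P_Ycas p V \<longlongrightarrow> q * limit_walk_exit r q 1 + (1 - q) * q * limit_walk_exit r q (1 - int r))
    (at_right (eps_thr p r))"
  unfolding q_def limit_walk_exit_def
proof (rule P_Ycas_tendsto_int_walk_exit[OF p r])
  show "at_right (eps_thr p r) \<le> at (eps_thr p r)"
    by (rule at_le) simp
  fix j :: int and k :: nat
  assume "0 < k"
  have "eventually (\<lambda>e. -1 < real k * (real r * eta_par p e - 1)) (at_right (eps_thr p r))"
    using tendsto_mono[OF at_le[OF subset_UNIV] lattice_deviation_tendsto[OF p r]]
    by (rule order_tendstoD) simp
  moreover have "eventually (\<lambda>e. real k * (real r * eta_par p e - 1) < 0) (at_right (eps_thr p r))"
    using eventually_at_right_less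
  proof eventually_elim
    case (elim e)
    then have "eta_par p e < 1 / real r"
      using eta_par_strict_antimono[OF p, of "eps_thr p r" e] eps_thr_bounds[OF p r]
        eta_par_eps_thr[OF p, of r] r by auto
    then show ?case
      using \<open>0 < k\<close> r by (simp add: mult_pos_neg field_simps)
  qed
  ultimately show "eventually (\<lambda>e.
        (lattice_pos (eta_par p e) r (j, k) \<in> {-1..1} \<longleftrightarrow> - int r < j \<and> j \<le> int r)
      \<and> (1 < lattice_pos (eta_par p e) r (j, k) \<longleftrightarrow> int r < j)) (at_right (eps_thr p r))"
    by eventually_elim (use r lattice_pos_iff_below[of r] in auto)
qed simp

lemma P_Ycas_tendsto_at_left:
  fixes V :: item_value
  assumes p: "1/2 < p" "p < 1" and r: "2 \<le> r"
  defines "q \<equiv> p_f V p (eps_thr p r)"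
  shows "(P_Ycas p V \<longlongrightarrow> q * limit_walk_exit r q 2 + (1 - q) * q * limit_walk_exit r q (2 - int r))
    (at_left (eps_thr p r))"
proof -
  let ?I = "\<lambda>j. - int r < j + 1 \<and> j + 1 \<le> int r" and ?A = "\<lambda>j. int r < j + 1"
  have "(P_Ycas p V \<longlongrightarrow> q * int_walk_exit ?I ?A r q 1 + (1 - q) * q * int_walk_exit ?I ?A r q (1 - int r))
    (at_left (eps_thr p r))"
    unfolding q_def
  proof (rule P_Ycas_tendsto_int_walk_exit[OF p r])
    show "at_left (eps_thr p r) \<le> at (eps_thr p r)"
      by (rule at_le) simp
    fix j :: int and k :: nat
    assume "0 < k"
    have "eventually (\<lambda>e. real k * (real r * eta_par p e - 1) < 1) (at_left (eps_thr p r))"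
      using tendsto_mono[OF at_le[OF subset_UNIV] lattice_deviation_tendsto[OF p r]]
      by (rule order_tendstoD) simp
    moreover have "eventually (\<lambda>e. 0 < real k * (real r * eta_par p e - 1)) (at_left (eps_thr p r))"
      using eventually_at_left_real[OF eps_thr_bounds(1)[OF p r]]
    proof eventually_elim
      case (elim e)
      then have "1 / real r < eta_par p e"
        using eta_par_strict_antimono[OF p, of e "eps_thr p r"] eta_par_eps_thr[OF p, of r] r by auto
      then show ?case
        using \<open>0 < k\<close> r by (simp add: field_simps)
    qed
    ultimately show "eventually (\<lambda>e. (lattice_pos (eta_par p e) r (j, k) \<in> {-1..1} \<longleftrightarrow> ?I j)
        \<and> (1 < lattice_pos (eta_par p e) r (j, k) \<longleftrightarrow> ?A j)) (at_left (eps_thr p r))"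
      by eventually_elim (use r lattice_pos_iff_above[of r] in auto)
  qed simp
  moreover have "int_walk_exit ?I ?A r q j = limit_walk_exit r q (j + 1)" for j
    unfolding limit_walk_exit_def by (rule int_walk_exit_shift)
  ultimately show ?thesis
    by (simp add: add.commute)
qed

section \<open>The limiting walk on the integers\<close>

lemma limit_walk_exit_step:
  assumes "0 < r" "0 \<le> q" "q < 1"
  shows "limit_walk_exit r q j =
    (if - int r < j \<and> j \<le> int r
     then q * of_bool (int r < j + 1) + (1 - q) * of_bool (int r < j - int r)
          + q * limit_walk_exit r q (j + 1) + (1 - q) * limit_walk_exit r q (j - int r)
     else 0)"
  unfolding limit_walk_exit_def int_walk_exit_def
  using assms by (intro exit_prob_step summable_first_exit_at[where m = 3]) (auto simp: numeral_3_eq_3)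

lemma limit_walk_exit_chain:
  fixes r :: nat and q :: real
  assumes r: "0 < r" and q: "0 \<le> q" "q < 1"
  defines "h \<equiv> limit_walk_exit r q"
  shows limit_walk_exit_below: "\<And>j. - int r < j \<Longrightarrow> j \<le> 0 \<Longrightarrow> h j = q * h (j + 1)"
    and limit_walk_exit_middle: "\<And>j. 1 \<le> j \<Longrightarrow> j < int r \<Longrightarrow> h j = q * h (j + 1) + (1 - q) * h (j - int r)"
    and limit_walk_exit_top: "h (int r) = q + (1 - q) * h 0"
proof -
  note step = limit_walk_exit_step[OF assms(1-3), folded h_def]
  show "h j = q * h (j + 1)" if "- int r < j" "j \<le> 0" for j
    using step[of j] step[of "j - int r"] that by simp
  show "h j = q * h (j + 1) + (1 - q) * h (j - int r)" if "1 \<le> j" "j < int r" for j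
    using step[of j] that by simp
  show "h (int r) = q + (1 - q) * h 0"
    using step[of "int r"] step[of "int r + 1"] r by simp
qed

lemma one_minus_mult_power_pos:
  fixes q :: real
  assumes "0 < q" "q < 1"
  shows "0 < 1 - real r * (1 - q) * q ^ r"
proof -
  have "real r * q ^ r = (\<Sum>i<r. q ^ r)"
    by simp
  also have "\<dots> \<le> (\<Sum>i<r. q ^ i)"
    using assms by (intro sum_mono power_decreasing) auto
  finally have "(1 - q) * (real r * q ^ r) \<le> (1 - q) * (\<Sum>i<r. q ^ i)"
    using assms by (intro mult_left_mono) auto
  also have "\<dots> = 1 - q ^ r"
    by (simp add: one_diff_power_eq)
  also have "\<dots> < 1"
    using assms by simp
  finally show ?thesis
    by (simp add: algebra_simps)
qed

text \<open>Below \<open>1\<close> only up-steps avoid the killing, so \<open>h (-i) = q^(i+1) h 1\<close>; going down from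
  \<open>r\<close>, each position gains one more way of falling back into that region, so
  \<open>h (r - i) = q^(i+1) + (i+1) (1 - q) q^(i+1) h 1\<close>. At \<open>i = r - 1\<close> this is an equation for \<open>h 1\<close>.\<close>
lemma limit_walk_exit_closed_form:
  fixes r :: nat and q :: real
  assumes r: "0 < r" and q: "0 < q" "q < 1"
  defines "h \<equiv> limit_walk_exit r q"
  shows "h 1 = q ^ r / (1 - real r * (1 - q) * q ^ r)" and "h (1 - int r) = q ^ r * h 1"
proof -
  note chain = limit_walk_exit_chain[OF r less_imp_le[OF q(1)] q(2), folded h_def]
  have neg: "h (- int i) = q ^ (i + 1) * h 1" if "i < r" for i
    using that
  proof (induction i)
    case 0
    then show ?case using chain(1)[of 0] r by simp
  next
    case (Suc i)
    then show ?case using chain(1)[of "- int (Suc i)"] by (simp add: add.commute)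
  qed
  have top: "h (int r - int i) = q ^ (i + 1) + real (i + 1) * (1 - q) * q ^ (i + 1) * h 1"
    if "i < r" for i
    using that
  proof (induction i)
    case 0
    then show ?case using chain(3) neg[of 0] by (simp add: algebra_simps)
  next
    case (Suc i)
    have "h (int r - int (Suc i)) = q * h (int r - int i) + (1 - q) * h (- int (Suc i))"
      using chain(2)[of "int r - int (Suc i)"] Suc.prems by (simp add: algebra_simps)
    then show ?case
      using Suc neg[of "Suc i"] by (simp add: algebra_simps)
  qed
  have "h 1 = q ^ r + real r * (1 - q) * q ^ r * h 1"
    using top[of "r - 1"] r by (simp add: of_nat_diff)
  then show "h 1 = q ^ r / (1 - real r * (1 - q) * q ^ r)"
    using one_minus_mult_power_pos[OF q, of r] by (simp add: field_simps)
  show "h (1 - int r) = q ^ r * h 1"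
    using neg[of "r - 1"] r by (simp add: of_nat_diff)
qed

lemma limit_walk_exit_1_two_steps:
  assumes r: "2 \<le> r" and q: "0 \<le> q" "q < 1"
  shows "q * limit_walk_exit r q 2 + (1 - q) * q * limit_walk_exit r q (2 - int r)
           = limit_walk_exit r q 1"
  using limit_walk_exit_middle[of r q 1] limit_walk_exit_below[of r q "1 - int r"] assms
  by (simp add: algebra_simps)

lemma relative_drop:
  fixes q L :: real
  assumes "0 < q" "q < 1" "0 < L"
  shows "q * (1 + (1 - q) * q ^ r) * L < L"
    and "(L - q * (1 + (1 - q) * q ^ r) * L) / L = (1 - q) * (1 - q ^ (r + 1))"
proof -
  have factor: "q * (1 + (1 - q) * q ^ r) = 1 - (1 - q) * (1 - q ^ (r + 1))"
    by (simp add: algebra_simps)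
  have "0 < (1 - q) * (1 - q ^ (r + 1))"
    using assms power_less_one_iff[of q "r + 1"] by simp
  then have "0 < (1 - q) * (1 - q ^ (r + 1)) * L"
    using assms(3) by simp
  then show "q * (1 + (1 - q) * q ^ r) * L < L"
    unfolding factor by (simp add: algebra_simps)
  show "(L - q * (1 + (1 - q) * q ^ r) * L) / L = (1 - q) * (1 - q ^ (r + 1))"
    unfolding factor using assms(3) by (simp add: field_simps)
qed

theorem mainTheorem5:
  fixes p :: real and V :: item_value and r :: nat
  assumes "1/2 < p" and "p < 1" and "2 \<le> r"
  defines "q \<equiv> p_f V p (eps_thr p r)"
  defines "Lplus \<equiv> q ^ (r + 1) * (1 + (1 - q) * q ^ r) / (1 - real r * (1 - q) * q ^ r)"
  defines "Lminus \<equiv> q ^ r / (1 - real r * (1 - q) * q ^ r)"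
  shows "(P_Ycas p V \<longlongrightarrow> Lplus) (at_right (eps_thr p r))
         \<and> (P_Ycas p V \<longlongrightarrow> Lminus) (at_left (eps_thr p r))
         \<and> Lplus < Lminus
         \<and> (Lminus - Lplus) / Lminus = (1 - q) * (1 - q ^ (r + 1))"
proof -
  let ?h = "limit_walk_exit r q"
  have q: "0 < q" "q < 1"
    unfolding q_def using p_f_eps_thr_bounds[OF assms(1-3)] .
  have h: "?h 1 = Lminus" "?h (1 - int r) = q ^ r * Lminus"
    using limit_walk_exit_closed_form[of r q] assms(3) q by (simp_all add: Lminus_def)
  have Lplus: "Lplus = q * (1 + (1 - q) * q ^ r) * Lminus"
    by (simp add: Lplus_def Lminus_def)
  have "(P_Ycas p V \<longlongrightarrow> q * ?h 1 + (1 - q) * q * ?h (1 - int r)) (at_right (eps_thr p r))"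
    using P_Ycas_tendsto_at_right[OF assms(1-3)] by (simp add: q_def)
  also have "q * ?h 1 + (1 - q) * q * ?h (1 - int r) = Lplus"
    by (simp add: Lplus h algebra_simps)
  finally have right: "(P_Ycas p V \<longlongrightarrow> Lplus) (at_right (eps_thr p r))" .
  have "(P_Ycas p V \<longlongrightarrow> q * ?h 2 + (1 - q) * q * ?h (2 - int r)) (at_left (eps_thr p r))"
    using P_Ycas_tendsto_at_left[OF assms(1-3)] by (simp add: q_def)
  also have "q * ?h 2 + (1 - q) * q * ?h (2 - int r) = ?h 1"
    using limit_walk_exit_1_two_steps[OF assms(3)] q by simp
  finally have left: "(P_Ycas p V \<longlongrightarrow> Lminus) (at_left (eps_thr p r))"
    by (simp only: h)
  have "0 < Lminus"
    using q one_minus_mult_power_pos[OF q, of r] by (simp add: Lminus_def)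
  with right left show ?thesis
    unfolding Lplus using relative_drop[OF q] by blast
qed

end
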